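(* Let $\boldsymbol{m}\in\mathbb{N}^2$, $\mathscr{f}\in C(\mathbb{D})$, and $f(\boldsymbol{i})=\mathscr{f}(r_{i_1},\theta_{i_2})$ for $\boldsymbol{i}\in\mathrm{I}^{(\boldsymbol{m})}$. Let $P_f$ be the unique function in $\Pi_\square=\mathrm{span}\{X_{\boldsymbol{\gamma}}:\boldsymbol{\gamma}\in\Gamma_\square\}$ with $P_f(r_{i_1},\theta_{i_2})=f(\boldsymbol{i})$ for all $\boldsymbol{i}\in\mathrm{I}^{(\boldsymbol{m})}$. Then $P_f\in C(\mathbb{D})$; in particular $P_f(0,\theta)=\mathscr{f}(0,0)$ for all $\theta\in[-\pi,\pi]$.
   Context: Functions on the unit disk are written in polar coordinates $(r,\theta)\in[0,1]\times[-\pi,\pi]$, and $C(\mathbb{D})$ is the set of continuous $\mathscr{f}$ on $[0,1]\times[-\pi,\pi]$ with $\mathscr{f}(r,-\pi)=\mathscr{f}(r,\pi)$ for $0\le r\le1$ and $\mathscr{f}(0,\theta_1)=\mathscr{f}(0,\theta_2)$ for all $\theta_1,\theta_2$ (the common value at $r=0$ is written $\mathscr{f}(0,0)$). $\mathrm{I}^{(\boldsymbol{m})}=\{(i_1,i_2)\in\mathbb{Z}^2:\ 0\le i_1\le m_1,\ -2m_2<i_2\le 2m_2,\ i_2\le0\text{ if }i_1=m_1,\ i_1+i_2\text{ even}\}$, $r_{i_1}=\cos\!\big(\frac{i_1\pi}{2m_1}\big)$, $\theta_{i_2}=\frac{i_2\pi}{2m_2}$. $X_{\boldsymbol{\gamma}}(r,\theta)=T_{\gamma_1}(r)e^{\mathrm{i}\gamma_2\theta}$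 with $T_n(r)=\cos(n\arccos r)$. $\Gamma_\square=\{\boldsymbol{\gamma}\in\mathbb{Z}^2: 0\le\gamma_1\le2m_1,\ -m_2<\gamma_2\le m_2,\ \gamma_1+\gamma_2\text{ even}\}$; the interpolation problem in $\Pi_\square$ has a unique solution. *)

theory Defs
  imports "HOL-Analysis.Analysis"
begin

text \<open>Polar coordinates on the closed unit disk: (r, theta) in [0,1] x [-pi,pi].\<close>

definition polar_dom :: "(real \<times> real) set" where
  "polar_dom = {0..1} \<times> {-pi..pi}"

definition in_CD :: "(real \<times> real \<Rightarrow> complex) \<Rightarrow> bool" where
  "in_CD F \<longleftrightarrow> continuous_on polar_dom F
     \<and> (\<forall>r\<in>{0..1}. F (r, -pi) = F (r, pi))
     \<and> (\<forall>t1\<in>{-pi..pi}. \<forall>t2\<in>{-pi..pi}. F (0, t1) = F (0, t2))"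

definition cheb_T :: "nat \<Rightarrow> real \<Rightarrow> real" where
  "cheb_T n r = cos (real n * arccos r)"

definition X_fun :: "int \<times> int \<Rightarrow> real \<times> real \<Rightarrow> complex" where
  "X_fun \<gamma> p = complex_of_real (cheb_T (nat (fst \<gamma>)) (fst p))
                  * exp (\<i> * of_real (of_int (snd \<gamma>) * snd p))"

definition I_set :: "nat \<Rightarrow> nat \<Rightarrow> (int \<times> int) set" where
  "I_set m1 m2 = {(i1, i2). 0 \<le> i1 \<and> i1 \<le> int m1 \<and> - 2 * int m2 < i2 \<and> i2 \<le> 2 * int m2
                    \<and> (i1 = int m1 \<longrightarrow> i2 \<le> 0) \<and> even (i1 + i2)}"

definition r_node :: "nat \<Rightarrow> int \<Rightarrow> real" where
  "r_node m1 i1 = cos (of_int i1 * pi / (2 * real m1))"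

definition theta_node :: "nat \<Rightarrow> int \<Rightarrow> real" where
  "theta_node m2 i2 = of_int i2 * pi / (2 * real m2)"

definition Gamma_sq :: "nat \<Rightarrow> nat \<Rightarrow> (int \<times> int) set" where
  "Gamma_sq m1 m2 = {(g1, g2). 0 \<le> g1 \<and> g1 \<le> 2 * int m1 \<and> - int m2 < g2 \<and> g2 \<le> int m2
                      \<and> even (g1 + g2)}"

definition Pi_sq :: "nat \<Rightarrow> nat \<Rightarrow> (real \<times> real \<Rightarrow> complex) set" where
  "Pi_sq m1 m2 = {P. \<exists>c :: int \<times> int \<Rightarrow> complex.
                      P = (\<lambda>p. \<Sum>\<gamma>\<in>Gamma_sq m1 m2. c \<gamma> * X_fun \<gamma> p)}"

end

theory Submission
  imports Defs "HOL-Computational_Algebra.Polynomial"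
begin

text \<open>At \<open>r = 0\<close> the odd Chebyshev polynomials vanish, so only the \<open>X\<^sub>\<gamma>\<close> with \<open>\<gamma>\<^sub>1\<close>
  (hence \<open>\<gamma>\<^sub>2\<close>) even survive, and \<open>P(0,\<theta>)\<close> is a trigonometric polynomial in \<open>\<theta>\<close> with
  the \<open>m\<^sub>2\<close> even frequencies of \<open>(-m\<^sub>2, m\<^sub>2]\<close>. Up to a unimodular factor it is an ordinary
  polynomial of degree \<open>< m\<^sub>2\<close> in \<open>e\<^sup>2\<^sup>i\<^sup>\<theta>\<close>. The nodes with \<open>i\<^sub>1 = m\<^sub>1\<close> all lie at the
  origin and give \<open>m\<^sub>2\<close> angles with distinct \<open>e\<^sup>2\<^sup>i\<^sup>\<theta>\<close>, at which \<open>P\<close> takes the single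
  value \<open>F(0,0)\<close>; so \<open>P(0,\<cdot>) - F(0,0)\<close> has too many roots and vanishes. Continuity and
  periodicity of \<open>P\<close> are inherited from the \<open>X\<^sub>\<gamma>\<close>.\<close>

lemma cheb_T_odd_at_0: "odd n \<Longrightarrow> cheb_T n 0 = 0"
  unfolding cheb_T_def by (auto simp: cos_zero_iff)

lemma exp_int_shift:
  fixes a k :: int and t :: real
  assumes "a \<le> k" "even (k - a)"
  shows "exp (\<i> * of_real (of_int k * t))
         = exp (\<i> * of_real (of_int a * t)) * exp (2 * \<i> * of_real t) ^ nat ((k - a) div 2)"
proof -
  define d where "d = (k - a) div 2"
  have k: "k = a + 2 * d" "d \<ge> 0" using assms unfolding d_def by auto
  have "exp (2 * \<i> * of_real t) ^ nat d = exp (of_int d * (2 * \<i> * of_real t))"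
    using k by (simp add: exp_of_nat_mult[symmetric])
  then have "exp (\<i> * of_real (of_int a * t)) * exp (2 * \<i> * of_real t) ^ nat d
      = exp (\<i> * of_real (of_int a * t) + of_int d * (2 * \<i> * of_real t))"
    by (simp add: exp_add)
  also have "\<i> * of_real (of_int a * t) + of_int d * (2 * \<i> * of_real t) = \<i> * of_real (of_int k * t)"
    using k by (simp add: algebra_simps)
  finally show ?thesis unfolding d_def by simp
qed

text \<open>Frequencies \<open>a, a + 2, \<dots>, a + 2(n - 1)\<close> make the sum \<open>e\<^sup>i\<^sup>a\<^sup>t q(e\<^sup>2\<^sup>i\<^sup>t)\<close> with
  \<open>deg q < n\<close>.\<close>
lemma exp_sum_eq_const_if_eq_at_nodes:
  fixes S :: "'s set" and d :: "'s \<Rightarrow> complex" and k :: "'s \<Rightarrow> int" and \<theta> :: "nat \<Rightarrow> real"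
  assumes "finite S"
    and freq: "\<And>s. s \<in> S \<Longrightarrow> d s \<noteq> 0 \<Longrightarrow> a \<le> k s \<and> k s < a + 2 * int n \<and> even (k s - a)"
    and zero_freq: "a \<le> 0" "0 < a + 2 * int n" "even a"
    and inj: "inj_on (\<lambda>l. exp (2 * \<i> * of_real (\<theta> l))) {..<n}"
    and nodes: "\<And>l. l < n \<Longrightarrow> (\<Sum>s\<in>S. d s * exp (\<i> * of_real (of_int (k s) * \<theta> l))) = b"
  shows "(\<Sum>s\<in>S. d s * exp (\<i> * of_real (of_int (k s) * t))) = b"
proof -
  define w :: "real \<Rightarrow> complex" where "w t = exp (2 * \<i> * of_real t)" for t
  define u :: "real \<Rightarrow> complex" where "u t = exp (\<i> * of_real (of_int a * t))" for t
  define e where "e j = nat ((j - a) div 2)" for j :: int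
  define q where "q = (\<Sum>s\<in>S. monom (d s) (e (k s))) - monom b (e 0)"
  have summand: "d s * exp (\<i> * of_real (of_int (k s) * t)) = u t * (d s * w t ^ e (k s))"
    if "s \<in> S" for s t
    using exp_int_shift[of a "k s" t] freq[OF that]
    by (cases "d s = 0") (simp_all add: u_def w_def e_def)
  have const: "u t * (b * w t ^ e 0) = b" for t
    using exp_int_shift[of a 0 t] zero_freq by (simp add: u_def w_def e_def)
  have sum_eq: "(\<Sum>s\<in>S. d s * exp (\<i> * of_real (of_int (k s) * t))) - b = u t * poly q (w t)" for t
  proof -
    have "(\<Sum>s\<in>S. d s * exp (\<i> * of_real (of_int (k s) * t)))
        = (\<Sum>s\<in>S. u t * (d s * w t ^ e (k s)))"
      by (intro sum.cong refl summand)
    then show ?thesis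
      by (simp add: q_def poly_sum poly_monom sum_distrib_left right_diff_distrib const)
  qed
  have "degree q < n"
  proof -
    have "degree (monom (d s) (e (k s))) \<le> n - 1" if "s \<in> S" for s
      using freq[OF that] by (cases "d s = 0") (auto simp: e_def degree_monom_eq)
    then have "degree (\<Sum>s\<in>S. monom (d s) (e (k s))) \<le> n - 1"
      by (rule degree_sum_le[OF \<open>finite S\<close>])
    moreover have "degree (monom b (e 0)) \<le> n - 1"
      using zero_freq by (intro order_trans[OF degree_monom_le]) (auto simp: e_def)
    ultimately have "degree q \<le> n - 1"
      unfolding q_def by (meson degree_diff_le)
    then show ?thesis using zero_freq by linarith
  qed
  moreover have "poly q (w (\<theta> l)) = 0" if "l < n" for l
    using sum_eq[of "\<theta> l"] nodes[OF that] by (simp add: u_def)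
  ultimately have "q = 0"
    using inj card_image[OF inj]
    by (intro poly_eqI_degree[of "(\<lambda>l. w (\<theta> l)) ` {..<n}"]) (auto simp: w_def)
  then show ?thesis using sum_eq[of t] by simp
qed

lemma inj_on_exp_int_pi_div:
  assumes "m > 0"
  shows "inj_on (\<lambda>j::int. exp (\<i> * of_real (of_int j * pi / real m))) {a..<a + 2 * int m}"
proof (rule inj_onI)
  fix j j' assume j: "j \<in> {a..<a + 2 * int m}" "j' \<in> {a..<a + 2 * int m}"
    and "exp (\<i> * of_real (of_int j * pi / real m)) = exp (\<i> * of_real (of_int j' * pi / real m))"
  then obtain n :: int where
    "\<i> * of_real (of_int j * pi / real m) = \<i> * of_real (of_int j' * pi / real m) + of_int (2 * n) * pi * \<i>"
    unfolding exp_eq by blast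
  then have "of_int j * pi / real m = of_int j' * pi / real m + of_int (2 * n) * pi"
    by (simp add: complex_eq_iff)
  then have "pi * of_int j = pi * (of_int j' + of_int (2 * n) * real m)"
    using assms by (simp add: field_simps)
  then have "(of_int j :: real) = of_int (j' + 2 * n * int m)"
    by simp
  then have diff: "j - j' = 2 * n * int m" by linarith
  have "n = 0"
  proof (rule ccontr)
    assume "n \<noteq> 0"
    then have "\<bar>2 * n * int m\<bar> \<ge> 2 * int m" by (simp add: abs_mult mult_le_cancel_right1) linarith
    with diff j show False by auto
  qed
  with diff show "j = j'" by simp
qed

lemma theta_node_in_range:
  assumes "m > 0" "\<bar>i\<bar> \<le> 2 * int m"
  shows "theta_node m i \<in> {-pi..pi}"
proof -
  have "\<bar>of_int i\<bar> \<le> 2 * real m" using assms(2) by linarith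
  then have "\<bar>of_int i * pi\<bar> \<le> pi * (2 * real m)"
    by (simp add: abs_mult mult.commute mult_left_mono)
  then have "\<bar>theta_node m i\<bar> \<le> pi"
    using assms(1) by (simp add: theta_node_def abs_divide divide_le_eq)
  then show ?thesis by auto
qed

lemma finite_Gamma_sq: "finite (Gamma_sq m1 m2)"
  by (rule finite_subset[of _ "{0..2 * int m1} \<times> {- int m2..int m2}"])
     (auto simp: Gamma_sq_def)

lemma continuous_on_X_fun: "continuous_on polar_dom (X_fun \<gamma>)"
  unfolding X_fun_def cheb_T_def polar_dom_def
  by (intro continuous_intros) auto

lemma X_fun_periodic: "X_fun \<gamma> (r, -pi) = X_fun \<gamma> (r, pi)"
proof -
  have "exp (\<i> * of_real (of_int (snd \<gamma>) * - pi)) = exp (\<i> * of_real (of_int (snd \<gamma>) * pi))"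
    unfolding exp_eq by (rule exI[of _ "- snd \<gamma>"]) (simp add: algebra_simps)
  then show ?thesis unfolding X_fun_def by simp
qed

lemma even_int_in_window:
  assumes "even x" "- int m < x" "x \<le> int m"
  shows "- 2 * ((int m - 1) div 2) \<le> x \<and> x < - 2 * ((int m - 1) div 2) + 2 * int m"
  using assms by presburger

lemma Pi_sq_at_origin_eq_const:
  assumes m1: "m1 \<ge> 1" and m2: "m2 \<ge> 1"
    and P: "P = (\<lambda>p. \<Sum>\<gamma>\<in>Gamma_sq m1 m2. c \<gamma> * X_fun \<gamma> p)"
    and nodes: "\<And>i2. (int m1, i2) \<in> I_set m1 m2 \<Longrightarrow> P (0, theta_node m2 i2) = b"
  shows "P (0, t) = b"
proof -
  define a :: int where "a = - 2 * ((int m2 - 1) div 2)"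
  define d where "d \<gamma> = c \<gamma> * complex_of_real (cheb_T (nat (fst \<gamma>)) 0)" for \<gamma> :: "int \<times> int"
  define i2 where "i2 l = - 2 * int l - int (m1 mod 2)" for l :: nat
  have P0: "P (0, t) = (\<Sum>\<gamma>\<in>Gamma_sq m1 m2. d \<gamma> * exp (\<i> * of_real (of_int (snd \<gamma>) * t)))" for t
    by (simp add: P X_fun_def d_def mult.assoc)
  have freq: "a \<le> snd \<gamma> \<and> snd \<gamma> < a + 2 * int m2 \<and> even (snd \<gamma> - a)"
    if "\<gamma> \<in> Gamma_sq m1 m2" "d \<gamma> \<noteq> 0" for \<gamma>
  proof -
    have "even (nat (fst \<gamma>))" using that cheb_T_odd_at_0 by (auto simp: d_def)
    with that(1) have "even (snd \<gamma>)" "- int m2 < snd \<gamma>" "snd \<gamma> \<le> int m2"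
      by (auto simp: Gamma_sq_def even_nat_iff)
    then show ?thesis using even_int_in_window unfolding a_def by auto
  qed
  have inj: "inj_on (\<lambda>l. exp (2 * \<i> * of_real (theta_node m2 (i2 l)))) {..<m2}"
  proof -
    have "inj_on i2 {..<m2}" by (auto simp: inj_on_def i2_def)
    moreover have "inj_on (\<lambda>j. exp (\<i> * of_real (of_int j * pi / real m2))) (i2 ` {..<m2})"
      by (rule inj_on_subset[OF inj_on_exp_int_pi_div[of m2 "1 - 2 * int m2"]])
         (use m2 in \<open>auto simp: i2_def\<close>)
    ultimately have "inj_on ((\<lambda>j. exp (\<i> * of_real (of_int j * pi / real m2))) \<circ> i2) {..<m2}"
      by (rule comp_inj_on)
    then show ?thesis by (simp add: comp_def theta_node_def)
  qed
  have "P (0, theta_node m2 (i2 l)) = b" if "l < m2" for l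
    using that by (intro nodes) (auto simp: I_set_def i2_def)
  then have at_nodes: "(\<Sum>\<gamma>\<in>Gamma_sq m1 m2. d \<gamma> * exp (\<i> * of_real (of_int (snd \<gamma>) * theta_node m2 (i2 l)))) = b"
    if "l < m2" for l
    using that by (simp only: P0)
  have "a \<le> 0" "0 < a + 2 * int m2" "even a"
    using m2 by (auto simp: a_def)
  show ?thesis
    unfolding P0
    by (rule exp_sum_eq_const_if_eq_at_nodes[where k = snd and n = m2, OF finite_Gamma_sq freq
          \<open>a \<le> 0\<close> \<open>0 < a + 2 * int m2\<close> \<open>even a\<close> inj at_nodes])
qed

theorem theorem8p1:
  fixes m1 m2 :: nat and F P :: "real \<times> real \<Rightarrow> complex"
  assumes "m1 \<ge> 1" and "m2 \<ge> 1"
    and "in_CD F"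
    and "P \<in> Pi_sq m1 m2"
    and "\<forall>i\<in>I_set m1 m2. P (r_node m1 (fst i), theta_node m2 (snd i))
                              = F (r_node m1 (fst i), theta_node m2 (snd i))"
  shows "in_CD P \<and> (\<forall>\<theta>\<in>{-pi..pi}. P (0, \<theta>) = F (0, 0))"
proof -
  obtain c where c: "P = (\<lambda>p. \<Sum>\<gamma>\<in>Gamma_sq m1 m2. c \<gamma> * X_fun \<gamma> p)"
    using assms(4) unfolding Pi_sq_def by blast
  have "P (0, theta_node m2 i2) = F (0, 0)" if "(int m1, i2) \<in> I_set m1 m2" for i2
  proof -
    have "r_node m1 (int m1) = 0" using assms(1) by (simp add: r_node_def)
    then have "P (0, theta_node m2 i2) = F (0, theta_node m2 i2)"
      using bspec[OF assms(5) that] by simp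
    also have "\<dots> = F (0, 0)"
    proof -
      have "theta_node m2 i2 \<in> {-pi..pi}"
        using that assms(2) by (intro theta_node_in_range) (auto simp: I_set_def)
      moreover have "(0::real) \<in> {-pi..pi}" by simp
      ultimately show ?thesis using assms(3) unfolding in_CD_def by blast
    qed
    finally show ?thesis .
  qed
  then have origin: "P (0, t) = F (0, 0)" for t
    using Pi_sq_at_origin_eq_const[OF assms(1,2) c] by blast
  have "continuous_on polar_dom P"
    unfolding c by (intro continuous_intros continuous_on_X_fun)
  moreover have "\<forall>r\<in>{0..1}. P (r, -pi) = P (r, pi)"
    unfolding c using X_fun_periodic by simp
  ultimately show ?thesis unfolding in_CD_def using origin by simp
qed

end
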